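(* For a mutually orthogonal $d$-dimensional pure-state ensemble $\Omega=\{(p_i,|\psi_i\rangle)\}_{i=0}^{k-1}$, \[ \mathbf{C}_{\mathrm{MIO}}(\Omega)+\mathbf{S}_{\min}(\Omega)\le \log_2 d, \] where $\mathbf{S}_{\min}(\Omega)=-\log_2 p_{\max}$ with $p_{\max}=\max_i p_i$ (the min-entropy of the average state $\hat\omega=\sum_i p_i|\psi_i\rangle\langle\psi_i|$).
   Context: Incoherent states $\mathcal{I}$ are density matrices diagonal in the computational basis; MIO are channels mapping $\mathcal{I}$ into $\mathcal{I}$. Robustness of coherence: $C_R(\rho)=\min\{s\ge0:(\rho+s\tau)/(1+s)\in\mathcal{I}\text{ for some state }\tau\}$. Post-discrimination coherence: $\mathbf{C}_{\mathrm{MIO}}(\Omega)=\log_2(1+\eta)$, $\eta=\max\sum_j p_j C_R(\sigma_j)$ over MIO channels $\mathcal{N}_{A\to BA'}$ ($\dim B=k$, $A'\cong A$) with $\sigma_j=\mathrm{tr}_B[\mathcal{N}(\rho_j)]$ and $\sum_j p_j\mathrm{tr}[\mathcal{N}(\rho_j)(|j\rangle\langle j|_B\otimes I_{A'})]=P_{\mathrm{suc}}(\Omega)$, the optimal POVM discrimination probability (equal to 1 here). *)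

theory Defs
  imports Complex_Main
begin

text \<open>Finite-dimensional matrices are represented as functions nat => nat => complex;
  an n x n matrix only uses the entries with both indices below n.
  Tensor products use the index convention (a, i) |-> a * n + i (first factor outer).\<close>

type_synonym cmat = "nat \<Rightarrow> nat \<Rightarrow> complex"

definition psd :: "nat \<Rightarrow> cmat \<Rightarrow> bool" where
  "psd n M \<longleftrightarrow> (\<forall>v :: nat \<Rightarrow> complex.
     let q = (\<Sum>i<n. \<Sum>j<n. cnj (v i) * M i j * v j) in Im q = 0 \<and> Re q \<ge> 0)"

definition mtrace :: "nat \<Rightarrow> cmat \<Rightarrow> complex" where
  "mtrace n M = (\<Sum>i<n. M i i)"

definition density :: "nat \<Rightarrow> cmat \<Rightarrow> bool" where
  "density n \<rho> \<longleftrightarrow> psd n \<rho> \<and> mtrace n \<rho> = 1"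

definition incoherent :: "nat \<Rightarrow> cmat \<Rightarrow> bool" where
  "incoherent n \<rho> \<longleftrightarrow> density n \<rho> \<and> (\<forall>i<n. \<forall>j<n. i \<noteq> j \<longrightarrow> \<rho> i j = 0)"

definition robustness :: "nat \<Rightarrow> cmat \<Rightarrow> real" where
  "robustness n \<rho> = Inf {s::real. s \<ge> 0 \<and> (\<exists>\<tau>. density n \<tau> \<and>
      incoherent n (\<lambda>i j. (\<rho> i j + complex_of_real s * \<tau> i j) / complex_of_real (1 + s)))}"

definition block :: "nat \<Rightarrow> cmat \<Rightarrow> nat \<Rightarrow> nat \<Rightarrow> cmat" where
  "block n X a b = (\<lambda>i j. X (a * n + i) (b * n + j))"

text \<open>(id_m (x) Phi) applied to X, where Phi maps n x n to n' x n' matrices.\<close>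
definition ampliate :: "nat \<Rightarrow> nat \<Rightarrow> (cmat \<Rightarrow> cmat) \<Rightarrow> cmat \<Rightarrow> cmat" where
  "ampliate n n' \<Phi> X = (\<lambda>r s. \<Phi> (block n X (r div n') (s div n')) (r mod n') (s mod n'))"

definition channel :: "nat \<Rightarrow> nat \<Rightarrow> (cmat \<Rightarrow> cmat) \<Rightarrow> bool" where
  "channel n n' \<Phi> \<longleftrightarrow>
     (\<forall>X Y. (\<forall>i<n. \<forall>j<n. X i j = Y i j) \<longrightarrow> (\<forall>i<n'. \<forall>j<n'. \<Phi> X i j = \<Phi> Y i j)) \<and>
     (\<forall>c X Y. \<forall>i<n'. \<forall>j<n'. \<Phi> (\<lambda>a b. c * X a b + Y a b) i j = c * \<Phi> X i j + \<Phi> Y i j) \<and>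
     (\<forall>m X. psd (m * n) X \<longrightarrow> psd (m * n') (ampliate n n' \<Phi> X)) \<and>
     (\<forall>X. mtrace n' (\<Phi> X) = mtrace n X)"

definition MIO :: "nat \<Rightarrow> nat \<Rightarrow> (cmat \<Rightarrow> cmat) \<Rightarrow> bool" where
  "MIO n n' \<Phi> \<longleftrightarrow> channel n n' \<Phi> \<and> (\<forall>\<rho>. incoherent n \<rho> \<longrightarrow> incoherent n' (\<Phi> \<rho>))"

definition proj :: "(nat \<Rightarrow> complex) \<Rightarrow> cmat" where
  "proj v = (\<lambda>a b. v a * cnj (v b))"

definition inner :: "nat \<Rightarrow> (nat \<Rightarrow> complex) \<Rightarrow> (nat \<Rightarrow> complex) \<Rightarrow> complex" where
  "inner d u v = (\<Sum>a<d. cnj (u a) * v a)"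

definition mprod_trace :: "nat \<Rightarrow> cmat \<Rightarrow> cmat \<Rightarrow> complex" where
  "mprod_trace d M N = (\<Sum>a<d. \<Sum>b<d. M a b * N b a)"

definition povm :: "nat \<Rightarrow> nat \<Rightarrow> (nat \<Rightarrow> cmat) \<Rightarrow> bool" where
  "povm d k M \<longleftrightarrow> (\<forall>j<k. psd d (M j)) \<and>
     (\<forall>a<d. \<forall>b<d. (\<Sum>j<k. M j a b) = (if a = b then 1 else 0))"

definition P_suc :: "nat \<Rightarrow> nat \<Rightarrow> (nat \<Rightarrow> real) \<Rightarrow> (nat \<Rightarrow> cmat) \<Rightarrow> real" where
  "P_suc d k p \<rho> = Sup {Re (\<Sum>j<k. complex_of_real (p j) * mprod_trace d (M j) (\<rho> j)) | M. povm d k M}"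

definition ptrace_B :: "nat \<Rightarrow> nat \<Rightarrow> cmat \<Rightarrow> cmat" where
  "ptrace_B k d X = (\<lambda>i j. \<Sum>b<k. X (b * d + i) (b * d + j))"

text \<open>tr[X (|j><j|_B (x) I_{A'})].\<close>
definition guess_weight :: "nat \<Rightarrow> cmat \<Rightarrow> nat \<Rightarrow> complex" where
  "guess_weight d X j = (\<Sum>i<d. X (j * d + i) (j * d + i))"

definition eta_MIO :: "nat \<Rightarrow> nat \<Rightarrow> (nat \<Rightarrow> real) \<Rightarrow> (nat \<Rightarrow> cmat) \<Rightarrow> real" where
  "eta_MIO d k p \<rho> = Sup {(\<Sum>j<k. p j * robustness d (ptrace_B k d (N (\<rho> j)))) | N.
      MIO d (k * d) N \<and>
      (\<Sum>j<k. complex_of_real (p j) * guess_weight d (N (\<rho> j)) j) = complex_of_real (P_suc d k p \<rho>)}"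

definition C_MIO :: "nat \<Rightarrow> nat \<Rightarrow> (nat \<Rightarrow> real) \<Rightarrow> (nat \<Rightarrow> cmat) \<Rightarrow> real" where
  "C_MIO d k p \<rho> = log 2 (1 + eta_MIO d k p \<rho>)"

definition S_min :: "nat \<Rightarrow> (nat \<Rightarrow> real) \<Rightarrow> real" where
  "S_min k p = - log 2 (Max (p ` {..<k}))"

end

theory Submission
  imports Defs
begin

(* Completing the orthonormal states \<psi>_j by the columns of the projector onto their orthogonal
  complement gives a rank-one resolution of the identity. It yields a POVM discriminating the
  ensemble perfectly, so P_suc = 1, and a measure-and-prepare MIO channel attaining it, so the
  supremum defining \<eta> is taken over a nonempty set.

  Conversely, let N be an admissible MIO channel. Since I/d is incoherent, D = N(I) is diagonal,
  positive and of trace d, and D dominates every output X_j = N(|\<psi>_j\<rangle>\<langle>\<psi>_j|). Perfect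
  guessing forces X_j into the j-th diagonal block, so \<sigma>_j is that block and is dominated by the
  j-th block D_j of D, an incoherent operator of trace \<lambda>_j \<ge> 1. Then
  (\<sigma>_j + (\<lambda>_j - 1) \<tau>_j) / \<lambda>_j = D_j / \<lambda>_j with \<tau>_j = (D_j - \<sigma>_j) / (\<lambda>_j - 1) shows
  C_R(\<sigma>_j) \<le> \<lambda>_j - 1, and averaging gives
  \<Sum>_j p_j C_R(\<sigma>_j) \<le> p_max \<Sum>_j \<lambda>_j - 1 = d p_max - 1, i.e. 1 + \<eta> \<le> d p_max. *)

section \<open>Positive semidefinite matrices\<close>

definition qform :: "nat \<Rightarrow> (nat \<Rightarrow> complex) \<Rightarrow> cmat \<Rightarrow> complex" where
  "qform n v M = (\<Sum>i<n. \<Sum>j<n. cnj (v i) * M i j * v j)"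

definition id_mat :: cmat where
  "id_mat a b = (if a = b then 1 else 0)"

lemma sum_id_mat_left: "b < n \<Longrightarrow> (\<Sum>i<n. id_mat b i * f i) = f b"
  by (simp add: id_mat_def if_distrib[of "\<lambda>x. x * _"] cong: if_cong)

lemma sum_id_mat_right: "a < n \<Longrightarrow> (\<Sum>i<n. f i * id_mat i a) = f a"
  by (simp add: id_mat_def if_distrib[of "\<lambda>x. _ * x"] cong: if_cong)

lemma psd_iff_qform: "psd n M \<longleftrightarrow> (\<forall>v. Im (qform n v M) = 0 \<and> 0 \<le> Re (qform n v M))"
  unfolding psd_def qform_def Let_def by simp

lemma qform_cong: "\<forall>i<n. \<forall>j<n. M i j = M' i j \<Longrightarrow> qform n v M = qform n v M'"
  unfolding qform_def by (intro sum.cong refl) auto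

lemma psd_cong: "psd n M \<Longrightarrow> \<forall>i<n. \<forall>j<n. M i j = M' i j \<Longrightarrow> psd n M'"
  using qform_cong[of n M M'] unfolding psd_iff_qform by metis

lemma mtrace_cong: "\<forall>i<n. \<forall>j<n. M i j = M' i j \<Longrightarrow> mtrace n M = mtrace n M'"
  unfolding mtrace_def by (intro sum.cong refl) auto

lemma incoherent_cong: "incoherent n M \<Longrightarrow> \<forall>i<n. \<forall>j<n. M i j = M' i j \<Longrightarrow> incoherent n M'"
  using psd_cong[of n M M'] mtrace_cong[of n M M'] unfolding incoherent_def density_def by metis

lemma qform_add_scaled: "qform n v (\<lambda>a b. c * X a b + Y a b) = c * qform n v X + qform n v Y"
  unfolding qform_def by (simp add: algebra_simps sum.distrib sum_distrib_left)

lemma qform_scale: "qform n v (\<lambda>a b. c * X a b) = c * qform n v X"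
  unfolding qform_def by (simp add: sum_distrib_left mult_ac)

lemma qform_sum: "qform n v (\<lambda>a b. \<Sum>t\<in>A. M t a b) = (\<Sum>t\<in>A. qform n v (M t))"
  unfolding qform_def by (simp add: sum_distrib_left sum_distrib_right sum.swap[of _ A] mult_ac)

lemma qform_proj: "qform n u (proj v) = inner n u v * cnj (inner n u v)"
  unfolding qform_def proj_def inner_def by (simp add: sum_distrib_left sum_distrib_right mult_ac)

lemma qform_id_mat: "qform n u id_mat = inner n u u"
proof -
  have "cnj (u i) * id_mat i j * u j = (if i = j then cnj (u i) * u j else 0)" for i j
    by (simp add: id_mat_def)
  then show ?thesis unfolding qform_def inner_def by simp
qed

lemma inner_commute: "inner n u v = cnj (inner n v u)"
  unfolding inner_def by (simp add: mult.commute)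

lemma mprod_trace_proj: "mprod_trace n M (proj v) = qform n v M"
  unfolding mprod_trace_def qform_def proj_def by (intro sum.cong refl) (simp add: mult_ac)

lemma mtrace_proj: "mtrace n (proj v) = inner n v v"
  unfolding mtrace_def proj_def inner_def by (simp add: mult.commute)

lemma mtrace_scale: "mtrace n (\<lambda>i j. c * M i j) = c * mtrace n M"
  unfolding mtrace_def by (simp add: sum_distrib_left)

lemma mtrace_diff: "mtrace n (\<lambda>i j. M i j - M' i j) = mtrace n M - mtrace n M'"
  unfolding mtrace_def by (simp add: sum_subtractf)

lemma psd_proj: "psd n (proj v)"
  unfolding psd_iff_qform qform_proj by (simp add: complex_mult_cnj)

lemma psd_id_mat: "psd n id_mat"
  unfolding psd_iff_qform qform_id_mat inner_def
  by (simp add: Im_sum Re_sum sum_nonneg complex_mult_cnj mult.commute)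

lemma psd_scale: "psd n M \<Longrightarrow> 0 \<le> c \<Longrightarrow> psd n (\<lambda>i j. complex_of_real c * M i j)"
  unfolding psd_iff_qform qform_scale by simp

lemma psd_sum: "(\<And>t. t \<in> A \<Longrightarrow> psd n (M t)) \<Longrightarrow> psd n (\<lambda>a b. \<Sum>t\<in>A. M t a b)"
  unfolding psd_iff_qform qform_sum by (simp add: Im_sum Re_sum sum_nonneg)

lemma psd_diag:
  assumes "psd n M" "i < n"
  shows "Im (M i i) = 0 \<and> 0 \<le> Re (M i i)"
proof -
  let ?e = "\<lambda>x. if x = i then 1 else 0"
  have "cnj (?e a) * M a b * ?e b = (if b = i then if a = i then M i i else 0 else 0)" for a b
    by simp
  then have "qform n ?e M = M i i"
    using assms(2) unfolding qform_def by simp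
  then show ?thesis using assms(1) unfolding psd_iff_qform by metis
qed

lemma psd_mtrace_real: "psd n M \<Longrightarrow> mtrace n M = complex_of_real (Re (mtrace n M))"
  using psd_diag[of n M] by (simp add: complex_eq_iff mtrace_def Im_sum)

lemma psd_mtrace_nonneg: "psd n M \<Longrightarrow> 0 \<le> Re (mtrace n M)"
  unfolding mtrace_def Re_sum using psd_diag[of n M] by (intro sum_nonneg) auto

lemma qform_two_point:
  assumes "i < n" "l < n" "i \<noteq> l"
  shows "qform n (\<lambda>x. if x = i then z else if x = l then 1 else 0) M
     = cnj z * z * M i i + cnj z * M i l + z * M l i + M l l"
proof -
  let ?v = "\<lambda>x. if x = i then z else if x = l then 1 else 0"
  have two: "(\<Sum>a<n. g a) = g i + g l" if "\<And>a. a \<noteq> i \<Longrightarrow> a \<noteq> l \<Longrightarrow> g a = 0"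
    for g :: "nat \<Rightarrow> complex"
  proof -
    have "(\<Sum>a<n. g a) = (\<Sum>a\<in>{i, l}. g a)"
      using assms that by (intro sum.mono_neutral_right) auto
    then show ?thesis using assms(3) by simp
  qed
  have "qform n ?v M = (\<Sum>a<n. cnj (?v a) * (\<Sum>b<n. M a b * ?v b))"
    unfolding qform_def by (simp add: sum_distrib_left mult.assoc)
  also have "\<dots> = (\<Sum>a<n. cnj (?v a) * (M a i * z + M a l))"
    using assms(3) by (subst two) auto
  also have "\<dots> = cnj z * (M i i * z + M i l) + (M l i * z + M l l)"
    using assms(3) by (subst two) auto
  finally show ?thesis by (simp add: algebra_simps)
qed

lemma affine_nonneg_slope_zero:
  fixes x c :: real
  assumes "\<And>t. 0 \<le> t * x + c"
  shows "x = 0"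
proof (rule ccontr)
  assume "x \<noteq> 0"
  have "0 \<le> (-(\<bar>c\<bar> + 1) / x) * x + c" by (rule assms)
  also have "\<dots> = -(\<bar>c\<bar> + 1) + c" using \<open>x \<noteq> 0\<close> by simp
  finally show False by linarith
qed

text \<open>Along the test vectors z e_i + e_l the quadratic form is affine in z and nonnegative,
  hence constant.\<close>

lemma psd_zero_diag_row:
  assumes "psd n M" "i < n" "l < n" "M i i = 0"
  shows "M i l = 0 \<and> M l i = 0"
proof (cases "i = l")
  case True
  then show ?thesis using assms by simp
next
  case False
  let ?a = "M i l" and ?b = "M l i" and ?c = "M l l"
  have q: "Im (cnj z * ?a + z * ?b + ?c) = 0 \<and> 0 \<le> Re (cnj z * ?a + z * ?b + ?c)" for z
    using qform_two_point[OF assms(2,3) False, of z M] assms(1,4) unfolding psd_iff_qform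
    by (metis add_0 mult_zero_right)
  have "0 \<le> t * Re (?a + ?b) + Re ?c" for t
    using q[of "complex_of_real t"] by (simp add: algebra_simps)
  then have re_sum: "Re (?a + ?b) = 0" by (rule affine_nonneg_slope_zero)
  have "0 \<le> t * Im (?a - ?b) + Re ?c" for t
    using q[of "\<i> * complex_of_real t"] by (simp add: algebra_simps)
  then have im_diff: "Im (?a - ?b) = 0" by (rule affine_nonneg_slope_zero)
  have "Im (?a + ?b) = 0" "Re (?b - ?a) = 0" using q[of 1] q[of \<i>] q[of 0] by simp_all
  with re_sum im_diff show ?thesis by (simp add: complex_eq_iff)
qed

lemma psd_trace_zero:
  assumes "psd n M" "Re (mtrace n M) = 0" "i < n" "j < n"
  shows "M i j = 0"
proof -
  have "(\<Sum>a<n. Re (M a a)) = 0" using assms(2) unfolding mtrace_def by (simp add: Re_sum)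
  then have "Re (M i i) = 0"
    using sum_nonneg_eq_0_iff[of "{..<n}" "\<lambda>a. Re (M a a)"] psd_diag[OF assms(1)] assms(3) by auto
  then have "M i i = 0" using psd_diag[OF assms(1,3)] by (simp add: complex_eq_iff)
  then show ?thesis using psd_zero_diag_row[OF assms(1,3,4)] by simp
qed

section \<open>Block structure of bipartite matrices\<close>

lemma sum_lessThan_mult:
  fixes f :: "nat \<Rightarrow> 'a::comm_monoid_add"
  shows "(\<Sum>r<m * n. f r) = (\<Sum>a<m. \<Sum>i<n. f (a * n + i))"
proof -
  have "(\<Sum>r\<in>{a * n..<a * n + n}. f r) = (\<Sum>i<n. f (a * n + i))" for a
    using sum.shift_bounds_nat_ivl[of f 0 "a * n" n] by (simp add: add.commute lessThan_atLeast0)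
  then show ?thesis using sum.nat_group[of f n m] by simp
qed

lemma sum_lessThan_add:
  fixes f :: "nat \<Rightarrow> 'a::comm_monoid_add"
  shows "(\<Sum>t<k + d. f t) = (\<Sum>t<k. f t) + (\<Sum>i<d. f (k + i))"
  by (induction d) (simp_all add: ac_simps)

lemma block_index_less:
  assumes "b < k" "i < (d::nat)"
  shows "b * d + i < k * d"
proof -
  have "b * d + i < Suc b * d" using assms(2) by simp
  also have "\<dots> \<le> k * d" using assms(1) by (intro mult_le_mono1) simp
  finally show ?thesis .
qed

lemma sum_lessThan_mult_single_block:
  fixes g :: "nat \<Rightarrow> 'a::comm_monoid_add"
  assumes "j < k" "\<And>r. r div d \<noteq> j \<Longrightarrow> g r = 0"
  shows "(\<Sum>r<k * d. g r) = (\<Sum>i<d. g (j * d + i))"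
proof -
  have "(\<Sum>i<d. g (b * d + i)) = 0" if "b \<noteq> j" for b
    using assms(2) that by (intro sum.neutral) auto
  then have "(\<Sum>b<k. \<Sum>i<d. g (b * d + i)) = (\<Sum>b\<in>{j}. \<Sum>i<d. g (b * d + i))"
    using assms(1) by (intro sum.mono_neutral_right) auto
  then show ?thesis by (simp add: sum_lessThan_mult)
qed

lemma qform_block_diag:
  assumes "j < k"
  shows "qform (k * d) (\<lambda>r. if r div d = j then v (r mod d) else 0) A = qform d v (block d A j j)"
proof -
  let ?u = "\<lambda>r. if r div d = j then v (r mod d) else 0"
  have "qform (k * d) ?u A = (\<Sum>i<d. \<Sum>s<k * d. cnj (?u (j * d + i)) * A (j * d + i) s * ?u s)"
    unfolding qform_def by (rule sum_lessThan_mult_single_block[OF assms]) simp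
  also have "\<dots> = (\<Sum>i<d. \<Sum>i'<d. cnj (?u (j * d + i)) * A (j * d + i) (j * d + i') * ?u (j * d + i'))"
    by (intro sum.cong refl sum_lessThan_mult_single_block[OF assms]) simp
  also have "\<dots> = qform d v (block d A j j)"
    unfolding qform_def block_def by (intro sum.cong refl) simp
  finally show ?thesis .
qed

lemma psd_block_diag: "psd (k * d) A \<Longrightarrow> j < k \<Longrightarrow> psd d (block d A j j)"
  using qform_block_diag unfolding psd_iff_qform by metis

lemma mtrace_blocks: "mtrace (k * d) A = (\<Sum>j<k. mtrace d (block d A j j))"
  unfolding mtrace_def block_def sum_lessThan_mult ..

lemma guess_weight_eq_mtrace_block: "guess_weight d X j = mtrace d (block d X j j)"
  unfolding guess_weight_def mtrace_def block_def ..

lemma guess_weight_le_one: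
  assumes "psd (k * d) X" "mtrace (k * d) X = 1" "j < k"
  shows "Im (guess_weight d X j) = 0 \<and> Re (guess_weight d X j) \<le> 1"
proof -
  have block_psd: "psd d (block d X b b)" if "b < k" for b
    using psd_block_diag[OF assms(1) that] .
  have "Re (mtrace d (block d X j j)) \<le> (\<Sum>b<k. Re (mtrace d (block d X b b)))"
    using assms(3) by (intro member_le_sum psd_mtrace_nonneg block_psd) auto
  also have "\<dots> = 1" using assms(2) by (simp add: mtrace_blocks flip: Re_sum)
  finally show ?thesis
    using psd_mtrace_real[OF block_psd[OF assms(3)]]
    unfolding guess_weight_eq_mtrace_block by (metis Im_complex_of_real)
qed

lemma ptrace_B_perfect_guess:
  assumes "psd (k * d) X" "mtrace (k * d) X = 1" "j < k" "guess_weight d X j = 1"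
    and "i < d" "i' < d"
  shows "ptrace_B k d X i i' = block d X j j i i'"
proof -
  define f where "f b = Re (mtrace d (block d X b b))" for b
  have block_psd: "psd d (block d X b b)" if "b < k" for b
    using psd_block_diag[OF assms(1) that] .
  have "(\<Sum>b<k. f b) = f j + (\<Sum>b\<in>{..<k} - {j}. f b)"
    using assms(3) by (subst sum.remove[of _ j]) auto
  moreover have "(\<Sum>b<k. f b) = 1" "f j = 1"
    using assms(2,4) unfolding f_def guess_weight_eq_mtrace_block by (simp_all add: mtrace_blocks flip: Re_sum)
  ultimately have "(\<Sum>b\<in>{..<k} - {j}. f b) = 0" by simp
  then have "f b = 0" if "b \<in> {..<k} - {j}" for b
    using that sum_nonneg_eq_0_iff[of "{..<k} - {j}" f] psd_mtrace_nonneg[OF block_psd]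
    unfolding f_def by auto
  then have "block d X b b i i' = 0" if "b \<in> {..<k} - {j}" for b
    using that psd_trace_zero[OF block_psd _ assms(5,6)] unfolding f_def by auto
  then have "ptrace_B k d X i i' = block d X j j i i' + (\<Sum>b\<in>{..<k} - {j}. 0)"
    using assms(3) unfolding ptrace_B_def by (subst sum.remove[of _ j]) (auto simp: block_def)
  then show ?thesis by simp
qed

section \<open>Robustness of coherence\<close>

lemma robustness_cong:
  assumes "\<forall>i<n. \<forall>j<n. \<sigma> i j = \<sigma>' i j"
  shows "robustness n \<sigma> = robustness n \<sigma>'"
proof -
  have "incoherent n (\<lambda>i j. (\<sigma> i j + c * \<tau> i j) / e) \<longleftrightarrow> incoherent n (\<lambda>i j. (\<sigma>' i j + c * \<tau> i j) / e)"
    for c e \<tau>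
  proof
    assume "incoherent n (\<lambda>i j. (\<sigma> i j + c * \<tau> i j) / e)"
    then show "incoherent n (\<lambda>i j. (\<sigma>' i j + c * \<tau> i j) / e)"
      by (rule incoherent_cong) (simp add: assms)
  next
    assume "incoherent n (\<lambda>i j. (\<sigma>' i j + c * \<tau> i j) / e)"
    then show "incoherent n (\<lambda>i j. (\<sigma> i j + c * \<tau> i j) / e)"
      by (rule incoherent_cong) (simp add: assms)
  qed
  then show ?thesis unfolding robustness_def by simp
qed

lemma robustness_le_witness:
  assumes "0 \<le> s" "density n \<tau>"
    and "incoherent n (\<lambda>i j. (\<sigma> i j + complex_of_real s * \<tau> i j) / complex_of_real (1 + s))"
  shows "0 \<le> robustness n \<sigma> \<and> robustness n \<sigma> \<le> s"
proof -
  let ?S = "{s::real. s \<ge> 0 \<and> (\<exists>\<tau>. density n \<tau> \<and>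
      incoherent n (\<lambda>i j. (\<sigma> i j + complex_of_real s * \<tau> i j) / complex_of_real (1 + s)))}"
  have "s \<in> ?S" using assms by blast
  moreover have "bdd_below ?S" by (auto simp: bdd_below_def)
  ultimately have "Inf ?S \<le> s" "0 \<le> Inf ?S" by (auto intro: cInf_lower cInf_greatest)
  then show ?thesis unfolding robustness_def by simp
qed

text \<open>Witness: D/\<lambda> = (\<sigma> + (\<lambda> - 1) \<tau>)/\<lambda> with \<tau> = (D - \<sigma>)/(\<lambda> - 1), where \<lambda> = tr D.\<close>

lemma robustness_le_dominating:
  assumes \<sigma>: "mtrace n \<sigma> = 1"
    and D: "psd n D" "\<forall>i<n. \<forall>j<n. i \<noteq> j \<longrightarrow> D i j = 0"
    and dom: "psd n (\<lambda>i j. D i j - \<sigma> i j)"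
  shows "0 \<le> robustness n \<sigma> \<and> robustness n \<sigma> \<le> Re (mtrace n D) - 1"
proof -
  define s where "s = Re (mtrace n D) - 1"
  have trD: "mtrace n D = complex_of_real (1 + s)"
    using psd_mtrace_real[OF D(1)] unfolding s_def by simp
  have gap: "Re (mtrace n (\<lambda>i j. D i j - \<sigma> i j)) = s"
    unfolding mtrace_diff trD \<sigma> by simp
  then have "0 \<le> s" using psd_mtrace_nonneg[OF dom] by simp
  define \<tau> where "\<tau> = (if s = 0 then D else (\<lambda>i j. complex_of_real (1 / s) * (D i j - \<sigma> i j)))"
  have \<tau>_gap: "\<forall>i<n. \<forall>j<n. complex_of_real s * \<tau> i j = D i j - \<sigma> i j"
    using psd_trace_zero[OF dom] gap by (auto simp: \<tau>_def)
  have "density n \<tau>"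
  proof (cases "s = 0")
    case True
    then show ?thesis using D(1) trD by (simp add: \<tau>_def density_def)
  next
    case False
    have "mtrace n \<tau> = complex_of_real (1 / s) * mtrace n (\<lambda>i j. D i j - \<sigma> i j)"
      unfolding \<tau>_def if_not_P[OF False] mtrace_scale ..
    also have "\<dots> = 1" unfolding mtrace_diff trD \<sigma> using False by simp
    finally show ?thesis
      using False \<open>0 \<le> s\<close> psd_scale[OF dom, of "1 / s"] by (simp add: \<tau>_def density_def)
  qed
  moreover have "incoherent n (\<lambda>i j. complex_of_real (1 / (1 + s)) * D i j)"
  proof -
    have "psd n (\<lambda>i j. complex_of_real (1 / (1 + s)) * D i j)"
      by (rule psd_scale[OF D(1)]) (use \<open>0 \<le> s\<close> in simp)
    moreover have "mtrace n (\<lambda>i j. complex_of_real (1 / (1 + s)) * D i j) = 1"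
      unfolding mtrace_scale trD of_real_mult[symmetric] using \<open>0 \<le> s\<close> by simp
    ultimately show ?thesis using D(2) unfolding incoherent_def density_def by simp
  qed
  then have "incoherent n (\<lambda>i j. (\<sigma> i j + complex_of_real s * \<tau> i j) / complex_of_real (1 + s))"
    by (rule incoherent_cong) (simp add: \<tau>_gap divide_inverse mult.commute)
  ultimately show ?thesis using robustness_le_witness[OF \<open>0 \<le> s\<close>] unfolding s_def by blast
qed

lemma channel_add_scaled:
  "channel n n' \<Phi> \<Longrightarrow> i < n' \<Longrightarrow> j < n' \<Longrightarrow>
    \<Phi> (\<lambda>a b. c * X a b + Y a b) i j = c * \<Phi> X i j + \<Phi> Y i j"
  unfolding channel_def by blast

lemma channel_zero: "channel n n' \<Phi> \<Longrightarrow> i < n' \<Longrightarrow> j < n' \<Longrightarrow> \<Phi> (\<lambda>a b. 0) i j = 0"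
  using channel_add_scaled[of n n' \<Phi> i j 1 "\<lambda>a b. 0" "\<lambda>a b. 0"] by simp

lemma channel_scale:
  "channel n n' \<Phi> \<Longrightarrow> i < n' \<Longrightarrow> j < n' \<Longrightarrow> \<Phi> (\<lambda>a b. c * X a b) i j = c * \<Phi> X i j"
  using channel_add_scaled[of n n' \<Phi> i j c X "\<lambda>a b. 0"] channel_zero[of n n' \<Phi> i j] by simp

lemma channel_diff:
  "channel n n' \<Phi> \<Longrightarrow> i < n' \<Longrightarrow> j < n' \<Longrightarrow> \<Phi> (\<lambda>a b. X a b - Y a b) i j = \<Phi> X i j - \<Phi> Y i j"
  using channel_add_scaled[of n n' \<Phi> i j "-1" Y X] by simp

lemma channel_mtrace: "channel n n' \<Phi> \<Longrightarrow> mtrace n' (\<Phi> X) = mtrace n X"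
  unfolding channel_def by blast

lemma channel_psd:
  assumes "channel n n' \<Phi>" "psd n X"
  shows "psd n' (\<Phi> X)"
proof -
  have "psd (1 * n') (ampliate n n' \<Phi> X)"
    using assms unfolding channel_def by (metis mult_1)
  then have "psd n' (ampliate n n' \<Phi> X)" by simp
  then show ?thesis
    by (rule psd_cong) (simp add: ampliate_def block_def)
qed

lemma MIO_channel: "MIO n n' \<Phi> \<Longrightarrow> channel n n' \<Phi>"
  unfolding MIO_def by simp

lemma incoherent_maximally_mixed:
  assumes "0 < n"
  shows "incoherent n (\<lambda>a b. complex_of_real (1 / n) * id_mat a b)"
proof -
  have "psd n (\<lambda>a b. complex_of_real (1 / n) * id_mat a b)"
    by (rule psd_scale[OF psd_id_mat]) simp
  moreover have "mtrace n (\<lambda>a b. complex_of_real (1 / n) * id_mat a b) = 1"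
    unfolding mtrace_scale using assms by (simp add: mtrace_def id_mat_def)
  ultimately show ?thesis unfolding incoherent_def density_def by (simp add: id_mat_def)
qed

lemma MIO_id_mat_off_diag:
  assumes "MIO n n' \<Phi>" "0 < n" "i < n'" "j < n'" "i \<noteq> j"
  shows "\<Phi> id_mat i j = 0"
proof -
  note ch = MIO_channel[OF assms(1)]
  have "incoherent n' (\<Phi> (\<lambda>a b. complex_of_real (1 / n) * id_mat a b))"
    using assms(1) incoherent_maximally_mixed[OF assms(2)] unfolding MIO_def by blast
  then have "\<Phi> (\<lambda>a b. complex_of_real (1 / n) * id_mat a b) i j = 0"
    using assms(3-5) unfolding incoherent_def by blast
  moreover have "id_mat = (\<lambda>a b. of_nat n * (complex_of_real (1 / n) * id_mat a b))"
    using assms(2) by (simp add: fun_eq_iff)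
  then have "\<Phi> id_mat i j = of_nat n * \<Phi> (\<lambda>a b. complex_of_real (1 / n) * id_mat a b) i j"
    using channel_scale[OF ch assms(3,4)] by metis
  ultimately show ?thesis by simp
qed

definition resolves_identity :: "nat \<Rightarrow> nat \<Rightarrow> (nat \<Rightarrow> nat \<Rightarrow> complex) \<Rightarrow> bool" where
  "resolves_identity n T w \<longleftrightarrow> (\<forall>a<n. \<forall>b<n. (\<Sum>t<T. cnj (w t a) * w t b) = id_mat a b)"

text \<open>Measure the rank-one POVM {|w t\<rangle>\<langle>w t|}_{t<T} and prepare the basis state |out t\<rangle>.\<close>

definition measure_prepare ::
    "nat \<Rightarrow> nat \<Rightarrow> (nat \<Rightarrow> nat \<Rightarrow> complex) \<Rightarrow> (nat \<Rightarrow> nat) \<Rightarrow> cmat \<Rightarrow> cmat" where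
  "measure_prepare n T w out X =
     (\<lambda>p q. if p = q then (\<Sum>t<T. if out t = p then qform n (w t) X else 0) else 0)"

lemma qform_lessThan_mult:
  "qform (m * n) v A = (\<Sum>\<alpha><m. \<Sum>a<n. \<Sum>\<beta><m. \<Sum>b<n.
     cnj (v (\<alpha> * n + a)) * A (\<alpha> * n + a) (\<beta> * n + b) * v (\<beta> * n + b))"
  unfolding qform_def by (simp add: sum_lessThan_mult)

lemma sum_qform_resolves_identity:
  assumes "resolves_identity n T w"
  shows "(\<Sum>t<T. qform n (w t) X) = mtrace n X"
proof -
  have "(\<Sum>t<T. qform n (w t) X) = (\<Sum>a<n. \<Sum>b<n. X a b * (\<Sum>t<T. cnj (w t a) * w t b))"
    unfolding qform_def by (simp add: sum_distrib_left sum.swap[of _ "{..<T}"] mult_ac)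
  also have "\<dots> = (\<Sum>a<n. \<Sum>b<n. X a b * id_mat a b)"
    using assms unfolding resolves_identity_def by (intro sum.cong refl) auto
  also have "\<dots> = mtrace n X"
    unfolding mtrace_def id_mat_def by (simp add: if_distrib cong: if_cong)
  finally show ?thesis .
qed

lemma mtrace_measure_prepare:
  assumes "\<forall>t<T. out t < n'"
  shows "mtrace n' (measure_prepare n T w out X) = (\<Sum>t<T. qform n (w t) X)"
proof -
  have "mtrace n' (measure_prepare n T w out X)
      = (\<Sum>p<n'. \<Sum>t<T. if out t = p then qform n (w t) X else 0)"
    unfolding mtrace_def measure_prepare_def by simp
  also have "\<dots> = (\<Sum>t<T. \<Sum>p<n'. if out t = p then qform n (w t) X else 0)"
    by (rule sum.swap)
  also have "\<dots> = (\<Sum>t<T. qform n (w t) X)"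
    using assms by (intro sum.cong refl) simp
  finally show ?thesis .
qed

lemma qform_ampliate_measure_prepare:
  assumes "\<forall>t<T. out t < n'"
  shows "qform (m * n') v (ampliate n n' (measure_prepare n T w out) X)
       = (\<Sum>t<T. qform (m * n) (\<lambda>r. v ((r div n) * n' + out t) * w t (r mod n)) X)"
proof -
  define G where "G t = (\<Sum>\<alpha><m. \<Sum>\<beta><m. cnj (v (\<alpha> * n' + out t))
      * qform n (w t) (block n X \<alpha> \<beta>) * v (\<beta> * n' + out t))" for t
  define F where "F t \<alpha> \<beta> p = (if out t = p then cnj (v (\<alpha> * n' + out t))
      * qform n (w t) (block n X \<alpha> \<beta>) * v (\<beta> * n' + out t) else 0)" for t \<alpha> \<beta> p
  have delta: "(\<Sum>q<n'. a * (if p = q then c else 0) * f q) = a * c * f p" if "p < n'"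
    for p and a c :: complex and f
  proof -
    have "(\<Sum>q<n'. a * (if p = q then c else 0) * f q) = (\<Sum>q<n'. if p = q then a * c * f q else 0)"
      by (intro sum.cong) auto
    then show ?thesis using that by simp
  qed
  have "qform (m * n') v (ampliate n n' (measure_prepare n T w out) X)
     = (\<Sum>\<alpha><m. \<Sum>p<n'. \<Sum>\<beta><m. \<Sum>q<n'.
          cnj (v (\<alpha> * n' + p)) * measure_prepare n T w out (block n X \<alpha> \<beta>) p q * v (\<beta> * n' + q))"
    unfolding qform_lessThan_mult ampliate_def by (intro sum.cong refl) simp
  also have "\<dots> = (\<Sum>\<alpha><m. \<Sum>p<n'. \<Sum>\<beta><m. cnj (v (\<alpha> * n' + p))
      * (\<Sum>t<T. if out t = p then qform n (w t) (block n X \<alpha> \<beta>) else 0) * v (\<beta> * n' + p))"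
    unfolding measure_prepare_def by (intro sum.cong refl) (simp add: delta)
  also have "\<dots> = (\<Sum>\<alpha><m. \<Sum>p<n'. \<Sum>\<beta><m. \<Sum>t<T. F t \<alpha> \<beta> p)"
    unfolding F_def
    by (intro sum.cong refl) (auto simp: sum_distrib_left sum_distrib_right intro!: sum.cong)
  also have "\<dots> = (\<Sum>t<T. \<Sum>\<alpha><m. \<Sum>\<beta><m. \<Sum>p<n'. F t \<alpha> \<beta> p)"
    by (simp only: sum.swap[of _ "{..<m}" "{..<T}"] sum.swap[of _ "{..<n'}" "{..<T}"]
        sum.swap[of _ "{..<n'}" "{..<m}"] sum.swap[of _ "{..<m}" "{..<T}"])
  also have "\<dots> = (\<Sum>t<T. G t)"
    unfolding F_def G_def using assms by (intro sum.cong refl) simp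
  also have "\<dots> = (\<Sum>t<T. qform (m * n) (\<lambda>r. v ((r div n) * n' + out t) * w t (r mod n)) X)"
  proof (intro sum.cong refl)
    fix t
    have "qform (m * n) (\<lambda>r. v ((r div n) * n' + out t) * w t (r mod n)) X
      = (\<Sum>\<alpha><m. \<Sum>\<beta><m. \<Sum>a<n. \<Sum>b<n. cnj (v (\<alpha> * n' + out t))
          * (cnj (w t a) * X (\<alpha> * n + a) (\<beta> * n + b) * w t b) * v (\<beta> * n' + out t))"
      unfolding qform_lessThan_mult
      by (simp add: sum.swap[of _ "{..<n}" "{..<m}"] mult_ac)
    also have "\<dots> = G t"
      unfolding G_def qform_def block_def by (simp add: sum_distrib_left sum_distrib_right)
    finally show "G t = qform (m * n) (\<lambda>r. v ((r div n) * n' + out t) * w t (r mod n)) X" ..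
  qed
  finally show ?thesis .
qed

lemma channel_measure_prepare:
  assumes "\<forall>t<T. out t < n'" "resolves_identity n T w"
  shows "channel n n' (measure_prepare n T w out)"
  unfolding channel_def
proof (intro conjI allI impI)
  fix X Y :: cmat and i j
  assume "\<forall>i<n. \<forall>j<n. X i j = Y i j"
  then show "measure_prepare n T w out X i j = measure_prepare n T w out Y i j"
    unfolding measure_prepare_def using qform_cong[of n X Y] by (simp cong: if_cong)
next
  fix c X Y i j
  show "measure_prepare n T w out (\<lambda>a b. c * X a b + Y a b) i j
      = c * measure_prepare n T w out X i j + measure_prepare n T w out Y i j"
    unfolding measure_prepare_def qform_add_scaled
    by (auto simp: sum_distrib_left sum.distrib[symmetric] intro!: sum.cong)
next
  fix m X
  assume "psd (m * n) X"
  then show "psd (m * n') (ampliate n n' (measure_prepare n T w out) X)"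
    unfolding psd_iff_qform qform_ampliate_measure_prepare[OF assms(1)]
    by (simp add: Im_sum Re_sum sum_nonneg)
next
  fix X
  show "mtrace n' (measure_prepare n T w out X) = mtrace n X"
    using mtrace_measure_prepare[OF assms(1)] sum_qform_resolves_identity[OF assms(2)] by simp
qed

lemma MIO_measure_prepare:
  assumes "\<forall>t<T. out t < n'" "resolves_identity n T w"
  shows "MIO n n' (measure_prepare n T w out)"
  unfolding MIO_def
proof (intro conjI allI impI)
  show ch: "channel n n' (measure_prepare n T w out)"
    by (rule channel_measure_prepare[OF assms])
  fix \<rho> assume "incoherent n \<rho>"
  then have "psd n \<rho>" "mtrace n \<rho> = 1" unfolding incoherent_def density_def by auto
  then show "incoherent n' (measure_prepare n T w out \<rho>)"
    unfolding incoherent_def density_def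
    using channel_psd[OF ch] channel_mtrace[OF ch] by (auto simp: measure_prepare_def)
qed

lemma sum_proj_resolves_identity:
  assumes "resolves_identity n T w" "a < n" "b < n"
  shows "(\<Sum>t<T. proj (w t) a b) = id_mat a b"
proof -
  have "(\<Sum>t<T. proj (w t) a b) = cnj (\<Sum>t<T. cnj (w t a) * w t b)"
    unfolding proj_def by (simp add: mult.commute)
  also have "\<dots> = id_mat a b"
    using assms unfolding resolves_identity_def by (simp add: id_mat_def)
  finally show ?thesis .
qed

section \<open>Completing an orthonormal family\<close>

definition orthonormal :: "nat \<Rightarrow> nat \<Rightarrow> (nat \<Rightarrow> nat \<Rightarrow> complex) \<Rightarrow> bool" where
  "orthonormal d k \<psi> \<longleftrightarrow> (\<forall>i<k. \<forall>j<k. inner d (\<psi> i) (\<psi> j) = (if i = j then 1 else 0))"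

definition range_proj :: "nat \<Rightarrow> (nat \<Rightarrow> nat \<Rightarrow> complex) \<Rightarrow> cmat" where
  "range_proj k \<psi> a b = (\<Sum>j<k. \<psi> j a * cnj (\<psi> j b))"

definition compl_proj :: "nat \<Rightarrow> (nat \<Rightarrow> nat \<Rightarrow> complex) \<Rightarrow> cmat" where
  "compl_proj k \<psi> a b = id_mat a b - range_proj k \<psi> a b"

definition completion :: "nat \<Rightarrow> (nat \<Rightarrow> nat \<Rightarrow> complex) \<Rightarrow> nat \<Rightarrow> nat \<Rightarrow> complex" where
  "completion k \<psi> t = (if t < k then \<psi> t else (\<lambda>a. compl_proj k \<psi> a (t - k)))"

lemma cnj_compl_proj: "cnj (compl_proj k \<psi> a b) = compl_proj k \<psi> b a"
  unfolding compl_proj_def range_proj_def id_mat_def by (simp add: mult.commute)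

lemma orthonormal_dim_pos:
  assumes "orthonormal d k \<psi>" "0 < k"
  shows "0 < d"
proof (rule ccontr)
  assume "\<not> 0 < d"
  then have "inner d (\<psi> 0) (\<psi> 0) = 0" unfolding inner_def by simp
  then show False using assms unfolding orthonormal_def by auto
qed

context
  fixes d k :: nat and \<psi> :: "nat \<Rightarrow> nat \<Rightarrow> complex"
  assumes orth: "orthonormal d k \<psi>"
begin

lemma range_proj_idem: "(\<Sum>i<d. range_proj k \<psi> b i * range_proj k \<psi> i a) = range_proj k \<psi> b a"
proof -
  have "(\<Sum>i<d. range_proj k \<psi> b i * range_proj k \<psi> i a)
     = (\<Sum>j<k. \<Sum>l<k. \<psi> j b * inner d (\<psi> j) (\<psi> l) * cnj (\<psi> l a))"
    unfolding range_proj_def inner_def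
    by (simp add: sum_distrib_left sum_distrib_right sum.swap[of _ "{..<d}"] mult_ac)
  also have "\<dots> = (\<Sum>j<k. \<Sum>l<k. if j = l then \<psi> j b * cnj (\<psi> l a) else 0)"
    using orth unfolding orthonormal_def by (intro sum.cong refl) simp
  also have "\<dots> = range_proj k \<psi> b a" unfolding range_proj_def by simp
  finally show ?thesis .
qed

lemma compl_proj_idem:
  assumes "a < d" "b < d"
  shows "(\<Sum>i<d. compl_proj k \<psi> b i * compl_proj k \<psi> i a) = compl_proj k \<psi> b a"
proof -
  have "(\<Sum>i<d. compl_proj k \<psi> b i * compl_proj k \<psi> i a)
      = (\<Sum>i<d. id_mat b i * id_mat i a) - (\<Sum>i<d. id_mat b i * range_proj k \<psi> i a)
        - (\<Sum>i<d. range_proj k \<psi> b i * id_mat i a)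
        + (\<Sum>i<d. range_proj k \<psi> b i * range_proj k \<psi> i a)"
    unfolding compl_proj_def by (simp add: algebra_simps sum_subtractf sum.distrib)
  also have "\<dots> = compl_proj k \<psi> b a"
    using assms by (simp add: sum_id_mat_left sum_id_mat_right range_proj_idem compl_proj_def)
  finally show ?thesis .
qed

lemma resolves_identity_completion: "resolves_identity d (k + d) (completion k \<psi>)"
  unfolding resolves_identity_def
proof (intro allI impI)
  fix a b assume ab: "a < d" "b < d"
  have "(\<Sum>t<k + d. cnj (completion k \<psi> t a) * completion k \<psi> t b)
     = (\<Sum>t<k. cnj (\<psi> t a) * \<psi> t b) + (\<Sum>i<d. compl_proj k \<psi> b i * compl_proj k \<psi> i a)"
    unfolding sum_lessThan_add completion_def by (simp add: cnj_compl_proj mult.commute)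
  also have "\<dots> = range_proj k \<psi> b a + compl_proj k \<psi> b a"
    unfolding compl_proj_idem[OF ab] range_proj_def by (simp add: mult.commute)
  also have "\<dots> = id_mat a b"
    unfolding compl_proj_def id_mat_def by simp
  finally show "(\<Sum>t<k + d. cnj (completion k \<psi> t a) * completion k \<psi> t b) = id_mat a b" .
qed

lemma inner_completion:
  assumes "t < k + d" "j < k"
  shows "inner d (completion k \<psi> t) (\<psi> j) = (if t = j then 1 else 0)"
proof (cases "t < k")
  case True
  then show ?thesis using orth assms unfolding orthonormal_def by (simp add: completion_def)
next
  case False
  define i where "i = t - k"
  have i: "i < d" using assms False unfolding i_def by auto
  have "inner d (completion k \<psi> t) (\<psi> j) = (\<Sum>a<d. compl_proj k \<psi> i a * \<psi> j a)"
    unfolding inner_def completion_def using False by (simp add: cnj_compl_proj i_def)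
  also have "\<dots> = \<psi> j i - (\<Sum>l<k. \<psi> l i * inner d (\<psi> l) (\<psi> j))"
    unfolding compl_proj_def range_proj_def inner_def
    by (simp add: algebra_simps sum_subtractf sum_id_mat_left[OF i] sum_distrib_left
        sum_distrib_right sum.swap[of _ "{..<d}"])
  also have "\<dots> = 0"
    using orth assms unfolding orthonormal_def by (simp add: if_distrib[of "\<lambda>x. _ * x"] cong: if_cong)
  finally show ?thesis using False assms by simp
qed

lemma qform_completion_proj:
  assumes "t < k + d" "j < k"
  shows "qform d (completion k \<psi> t) (proj (\<psi> j)) = (if t = j then 1 else 0)"
  using inner_completion[OF assms] by (simp add: qform_proj)

lemma qform_proj_completion:
  assumes "t < k + d" "j < k"
  shows "qform d (\<psi> j) (proj (completion k \<psi> t)) = (if t = j then 1 else 0)"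
  using inner_completion[OF assms] inner_commute[of d "\<psi> j"] by (simp add: qform_proj)

lemma psd_id_minus_proj:
  assumes "j < k"
  shows "psd d (\<lambda>a b. id_mat a b - proj (\<psi> j) a b)"
proof -
  have others: "psd d (\<lambda>a b. \<Sum>t\<in>{..<k + d} - {j}. proj (completion k \<psi> t) a b)"
    by (rule psd_sum) (rule psd_proj)
  have eq: "(\<Sum>t\<in>{..<k + d} - {j}. proj (completion k \<psi> t) a b) = id_mat a b - proj (\<psi> j) a b"
    if "a < d" "b < d" for a b
  proof -
    have "proj (\<psi> j) a b + (\<Sum>t\<in>{..<k + d} - {j}. proj (completion k \<psi> t) a b) = id_mat a b"
      using sum.remove[of "{..<k + d}" j "\<lambda>t. proj (completion k \<psi> t) a b"] assms
        sum_proj_resolves_identity[OF resolves_identity_completion that]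
      by (simp add: completion_def)
    then show ?thesis by (metis add_diff_cancel_left')
  qed
  from others show ?thesis by (rule psd_cong) (simp add: eq)
qed

end

text \<open>Completion vectors beyond the ensemble are orthogonal to all its states, so the outcome
  they are assigned to is irrelevant.\<close>

definition guess :: "nat \<Rightarrow> nat \<Rightarrow> nat" where
  "guess k t = (if t < k then t else 0)"

definition discriminating_povm :: "nat \<Rightarrow> nat \<Rightarrow> (nat \<Rightarrow> nat \<Rightarrow> complex) \<Rightarrow> nat \<Rightarrow> cmat" where
  "discriminating_povm d k \<psi> j =
     (\<lambda>a b. \<Sum>t\<in>{t \<in> {..<k + d}. guess k t = j}. proj (completion k \<psi> t) a b)"

definition discriminating_channel :: "nat \<Rightarrow> nat \<Rightarrow> (nat \<Rightarrow> nat \<Rightarrow> complex) \<Rightarrow> cmat \<Rightarrow> cmat" where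
  "discriminating_channel d k \<psi> = measure_prepare d (k + d) (completion k \<psi>) (\<lambda>t. guess k t * d)"

lemma povm_success_le_one:
  assumes "povm d k M" "j < k" "inner d v v = 1"
  shows "Re (mprod_trace d (M j) (proj v)) \<le> 1"
proof -
  have "Re (qform d v (M j)) \<le> (\<Sum>l<k. Re (qform d v (M l)))"
    using assms(1,2) unfolding povm_def psd_iff_qform by (intro member_le_sum) auto
  also have "\<dots> = Re (qform d v (\<lambda>a b. \<Sum>l<k. M l a b))"
    unfolding qform_sum by (simp add: Re_sum)
  also have "qform d v (\<lambda>a b. \<Sum>l<k. M l a b) = qform d v id_mat"
    using assms(1) unfolding povm_def id_mat_def by (intro qform_cong) auto
  finally show ?thesis using assms(3) unfolding mprod_trace_proj qform_id_mat by simp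
qed

context
  fixes d k :: nat and \<psi> :: "nat \<Rightarrow> nat \<Rightarrow> complex"
  assumes orth: "orthonormal d k \<psi>" and k_pos: "0 < k"
begin

lemma MIO_discriminating_channel: "MIO d (k * d) (discriminating_channel d k \<psi>)"
proof -
  have "guess k t * d < k * d" for t
    using k_pos orthonormal_dim_pos[OF orth k_pos] by (simp add: guess_def)
  then show ?thesis
    unfolding discriminating_channel_def
    by (intro MIO_measure_prepare resolves_identity_completion[OF orth]) auto
qed

lemma discriminating_channel_proj:
  assumes "j < k"
  shows "discriminating_channel d k \<psi> (proj (\<psi> j)) p q = (if p = q \<and> p = j * d then 1 else 0)"
proof -
  have "(\<Sum>t<k + d. if guess k t * d = p then qform d (completion k \<psi> t) (proj (\<psi> j)) else 0)
      = (\<Sum>t<k + d. if t = j then (if guess k t * d = p then 1 else 0) else 0)"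
    using qform_completion_proj[OF orth _ assms] by (intro sum.cong refl) auto
  also have "\<dots> = (if j * d = p then 1 else 0)" using assms by (simp add: guess_def)
  finally show ?thesis unfolding discriminating_channel_def measure_prepare_def by auto
qed

lemma guess_weight_discriminating_channel:
  assumes "j < k"
  shows "guess_weight d (discriminating_channel d k \<psi> (proj (\<psi> j))) j = 1"
  using orthonormal_dim_pos[OF orth k_pos]
  by (simp add: guess_weight_def discriminating_channel_proj[OF assms])

lemma povm_discriminating_povm: "povm d k (discriminating_povm d k \<psi>)"
  unfolding povm_def
proof (intro conjI allI impI)
  fix j
  show "psd d (discriminating_povm d k \<psi> j)"
    unfolding discriminating_povm_def by (rule psd_sum) (rule psd_proj)
next
  fix a b assume "a < d" "b < d"
  have "(\<Sum>j<k. discriminating_povm d k \<psi> j a b) = (\<Sum>t<k + d. proj (completion k \<psi> t) a b)"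
    unfolding discriminating_povm_def using k_pos by (intro sum.group) (auto simp: guess_def)
  also have "\<dots> = id_mat a b"
    by (rule sum_proj_resolves_identity[OF resolves_identity_completion[OF orth] \<open>a < d\<close> \<open>b < d\<close>])
  finally show "(\<Sum>j<k. discriminating_povm d k \<psi> j a b) = (if a = b then 1 else 0)"
    unfolding id_mat_def .
qed

lemma mprod_trace_discriminating_povm:
  assumes "j < k"
  shows "mprod_trace d (discriminating_povm d k \<psi> j) (proj (\<psi> j)) = 1"
proof -
  have "mprod_trace d (discriminating_povm d k \<psi> j) (proj (\<psi> j))
      = (\<Sum>t\<in>{t \<in> {..<k + d}. guess k t = j}. if t = j then 1 else 0)"
    unfolding mprod_trace_proj discriminating_povm_def qform_sum
    using qform_proj_completion[OF orth _ assms] by (intro sum.cong refl) auto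
  also have "\<dots> = 1" using assms by (simp add: guess_def)
  finally show ?thesis .
qed

lemma P_suc_orthonormal:
  assumes "\<forall>i<k. 0 \<le> p i" "(\<Sum>i<k. p i) = 1"
  shows "P_suc d k p (\<lambda>i. proj (\<psi> i)) = 1"
  unfolding P_suc_def
proof (rule cSup_eq_maximum)
  have "Re (\<Sum>j<k. complex_of_real (p j) * mprod_trace d (discriminating_povm d k \<psi> j) (proj (\<psi> j))) = 1"
    using assms(2) by (simp add: mprod_trace_discriminating_povm Re_sum)
  then show "1 \<in> {Re (\<Sum>j<k. complex_of_real (p j) * mprod_trace d (M j) (proj (\<psi> j))) |M. povm d k M}"
    using povm_discriminating_povm by (intro CollectI exI[of _ "discriminating_povm d k \<psi>"] conjI) auto
next
  fix x assume "x \<in> {Re (\<Sum>j<k. complex_of_real (p j) * mprod_trace d (M j) (proj (\<psi> j))) |M. povm d k M}"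
  then obtain M where M: "povm d k M"
    and x: "x = (\<Sum>j<k. p j * Re (mprod_trace d (M j) (proj (\<psi> j))))"
    by (auto simp: Re_sum)
  have "x \<le> (\<Sum>j<k. p j * 1)"
    unfolding x using assms(1) orth povm_success_le_one[OF M] unfolding orthonormal_def
    by (intro sum_mono mult_left_mono) auto
  then show "x \<le> 1" using assms(2) by simp
qed

end

section \<open>Channels that discriminate perfectly\<close>

lemma convex_combination_eq_one:
  fixes g :: "nat \<Rightarrow> complex"
  assumes "\<forall>i<k. 0 \<le> p i" "(\<Sum>i<k. p i) = 1" "\<forall>i<k. Im (g i) = 0 \<and> Re (g i) \<le> 1"
    and "(\<Sum>i<k. complex_of_real (p i) * g i) = 1" "j < k" "p j \<noteq> 0"
  shows "g j = 1"
proof -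
  have "(\<Sum>i<k. p i * (1 - Re (g i))) = 0"
    using arg_cong[OF assms(4), of Re] assms(2) by (simp add: Re_sum algebra_simps sum_subtractf)
  moreover have "\<forall>i\<in>{..<k}. 0 \<le> p i * (1 - Re (g i))" using assms(1,3) by simp
  ultimately have "p j * (1 - Re (g j)) = 0"
    using assms(5) sum_nonneg_eq_0_iff[of "{..<k}" "\<lambda>i. p i * (1 - Re (g i))"] by auto
  then show ?thesis using assms(3,5,6) by (simp add: complex_eq_iff)
qed

context
  fixes d k :: nat and \<psi> :: "nat \<Rightarrow> nat \<Rightarrow> complex" and N :: "cmat \<Rightarrow> cmat"
  assumes orth: "orthonormal d k \<psi>" and k_pos: "0 < k" and mio: "MIO d (k * d) N"
begin

lemma psd_image_id: "psd (k * d) (N id_mat)"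
  by (rule channel_psd[OF MIO_channel[OF mio] psd_id_mat])

lemma mtrace_image_id: "mtrace (k * d) (N id_mat) = of_nat d"
  unfolding channel_mtrace[OF MIO_channel[OF mio]] by (simp add: mtrace_def id_mat_def)

lemma psd_image_proj: "psd (k * d) (N (proj (\<psi> j)))"
  by (rule channel_psd[OF MIO_channel[OF mio] psd_proj])

lemma mtrace_image_proj: "j < k \<Longrightarrow> mtrace (k * d) (N (proj (\<psi> j))) = 1"
  using orth unfolding channel_mtrace[OF MIO_channel[OF mio]] mtrace_proj orthonormal_def by simp

lemma psd_image_id_minus_image_proj:
  assumes "j < k"
  shows "psd (k * d) (\<lambda>r s. N id_mat r s - N (proj (\<psi> j)) r s)"
  using channel_psd[OF MIO_channel[OF mio] psd_id_minus_proj[OF orth assms]]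
  by (rule psd_cong) (simp add: channel_diff[OF MIO_channel[OF mio]])

lemma robustness_perfect_guess_le:
  assumes j: "j < k" and perfect: "guess_weight d (N (proj (\<psi> j))) j = 1"
  shows "0 \<le> robustness d (ptrace_B k d (N (proj (\<psi> j))))
    \<and> robustness d (ptrace_B k d (N (proj (\<psi> j)))) \<le> Re (mtrace d (block d (N id_mat) j j)) - 1"
proof -
  let ?X = "N (proj (\<psi> j))" and ?D = "block d (N id_mat) j j"
  have "robustness d (ptrace_B k d ?X) = robustness d (block d ?X j j)"
    by (rule robustness_cong)
      (simp add: ptrace_B_perfect_guess[OF psd_image_proj mtrace_image_proj[OF j] j perfect])
  moreover have "0 \<le> robustness d (block d ?X j j) \<and> robustness d (block d ?X j j) \<le> Re (mtrace d ?D) - 1"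
  proof (rule robustness_le_dominating)
    show "mtrace d (block d ?X j j) = 1"
      using perfect unfolding guess_weight_eq_mtrace_block .
    show "psd d ?D" by (rule psd_block_diag[OF psd_image_id j])
    show "\<forall>a<d. \<forall>b<d. a \<noteq> b \<longrightarrow> ?D a b = 0"
      using MIO_id_mat_off_diag[OF mio orthonormal_dim_pos[OF orth k_pos]] block_index_less[OF j]
      unfolding block_def by simp
    show "psd d (\<lambda>a b. ?D a b - block d ?X j j a b)"
      using psd_block_diag[OF psd_image_id_minus_image_proj[OF j] j] unfolding block_def .
  qed
  ultimately show ?thesis by simp
qed

lemma expected_robustness_le:
  assumes p: "\<forall>i<k. 0 \<le> p i" "(\<Sum>i<k. p i) = 1"
    and success: "(\<Sum>j<k. complex_of_real (p j) * guess_weight d (N (proj (\<psi> j))) j) = 1"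
  shows "0 \<le> (\<Sum>j<k. p j * robustness d (ptrace_B k d (N (proj (\<psi> j)))))
     \<and> (\<Sum>j<k. p j * robustness d (ptrace_B k d (N (proj (\<psi> j))))) \<le> real d * Max (p ` {..<k}) - 1"
proof -
  define R where "R j = robustness d (ptrace_B k d (N (proj (\<psi> j))))" for j
  define \<Lambda> where "\<Lambda> j = Re (mtrace d (block d (N id_mat) j j))" for j
  have perfect: "guess_weight d (N (proj (\<psi> j))) j = 1" if "j < k" "p j \<noteq> 0" for j
    using convex_combination_eq_one[OF p _ success that]
      guess_weight_le_one[OF psd_image_proj mtrace_image_proj] by blast
  have term_bounds: "0 \<le> p j * R j \<and> p j * R j \<le> p j * (\<Lambda> j - 1)" if "j < k" for j
  proof (cases "p j = 0")
    case True
    then show ?thesis by simp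
  next
    case False
    have "0 \<le> R j \<and> R j \<le> \<Lambda> j - 1"
      using robustness_perfect_guess_le[OF that perfect[OF that False]] unfolding R_def \<Lambda>_def .
    then show ?thesis using p(1) that by (simp add: mult_left_mono)
  qed
  have "(\<Sum>j<k. p j * R j) \<le> (\<Sum>j<k. p j * (\<Lambda> j - 1))"
    using term_bounds by (intro sum_mono) auto
  also have "\<dots> = (\<Sum>j<k. p j * \<Lambda> j) - 1"
    using p(2) by (simp add: algebra_simps sum_subtractf)
  also have "(\<Sum>j<k. p j * \<Lambda> j) \<le> (\<Sum>j<k. Max (p ` {..<k}) * \<Lambda> j)"
    using psd_mtrace_nonneg[OF psd_block_diag[OF psd_image_id]] unfolding \<Lambda>_def
    by (intro sum_mono mult_right_mono) auto
  also have "\<dots> = Max (p ` {..<k}) * real d"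
  proof -
    have "(\<Sum>j<k. \<Lambda> j) = real d"
      using arg_cong[OF mtrace_image_id, of Re] unfolding \<Lambda>_def mtrace_blocks by (simp add: Re_sum)
    then show ?thesis by (simp flip: sum_distrib_left)
  qed
  finally have "(\<Sum>j<k. p j * R j) \<le> real d * Max (p ` {..<k}) - 1" by (simp add: mult.commute)
  moreover have "0 \<le> (\<Sum>j<k. p j * R j)" using term_bounds by (intro sum_nonneg) auto
  ultimately show ?thesis unfolding R_def by simp
qed

end

lemma eta_MIO_bounds:
  assumes orth: "orthonormal d k \<psi>" and k_pos: "0 < k"
    and p: "\<forall>i<k. 0 \<le> p i" "(\<Sum>i<k. p i) = 1"
  shows "0 \<le> eta_MIO d k p (\<lambda>i. proj (\<psi> i))
    \<and> eta_MIO d k p (\<lambda>i. proj (\<psi> i)) \<le> real d * Max (p ` {..<k}) - 1"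
proof -
  define E where "E = {(\<Sum>j<k. p j * robustness d (ptrace_B k d (N (proj (\<psi> j))))) | N.
      MIO d (k * d) N \<and>
      (\<Sum>j<k. complex_of_real (p j) * guess_weight d (N (proj (\<psi> j))) j) = 1}"
  have eta: "eta_MIO d k p (\<lambda>i. proj (\<psi> i)) = Sup E"
    unfolding eta_MIO_def E_def P_suc_orthonormal[OF orth k_pos p] by simp
  have bounds: "0 \<le> x \<and> x \<le> real d * Max (p ` {..<k}) - 1" if "x \<in> E" for x
    using that expected_robustness_le[OF orth k_pos _ p] unfolding E_def by blast
  have "(\<Sum>j<k. complex_of_real (p j) * guess_weight d (discriminating_channel d k \<psi> (proj (\<psi> j))) j) = 1"
    using p(2) by (simp add: guess_weight_discriminating_channel[OF orth k_pos] flip: of_real_sum)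
  then have "(\<Sum>j<k. p j * robustness d (ptrace_B k d (discriminating_channel d k \<psi> (proj (\<psi> j))))) \<in> E"
    unfolding E_def using MIO_discriminating_channel[OF orth k_pos] by blast
  then have "E \<noteq> {}" "bdd_above E" "\<exists>x\<in>E. 0 \<le> x"
    using bounds unfolding bdd_above_def by blast+
  then show ?thesis
    unfolding eta using bounds by (meson cSup_least cSup_upper2)
qed

theorem theoremS1:
  fixes d k :: nat and p :: "nat \<Rightarrow> real" and \<psi> :: "nat \<Rightarrow> nat \<Rightarrow> complex"
  assumes "\<forall>i<k. p i \<ge> 0"
    and "(\<Sum>i<k. p i) = 1"
    and "\<forall>i<k. \<forall>j<k. inner d (\<psi> i) (\<psi> j) = (if i = j then 1 else 0)"
  shows "C_MIO d k p (\<lambda>i. proj (\<psi> i)) + S_min k p \<le> log 2 (real d)"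
proof -
  have orth: "orthonormal d k \<psi>" using assms(3) unfolding orthonormal_def .
  have k_pos: "0 < k" using assms(2) by (cases k) auto
  define p_max where "p_max = Max (p ` {..<k})"
  have "1 \<le> (\<Sum>i<k. p_max)"
    unfolding assms(2)[symmetric] p_max_def by (intro sum_mono Max_ge) auto
  then have "0 < real k * p_max" by simp
  then have p_max_pos: "0 < p_max" by (simp add: zero_less_mult_iff)
  have d_pos: "0 < d" by (rule orthonormal_dim_pos[OF orth k_pos])
  have eta: "0 \<le> eta_MIO d k p (\<lambda>i. proj (\<psi> i))" "eta_MIO d k p (\<lambda>i. proj (\<psi> i)) \<le> real d * p_max - 1"
    using eta_MIO_bounds[OF orth k_pos assms(1,2)] unfolding p_max_def by auto
  have "C_MIO d k p (\<lambda>i. proj (\<psi> i)) \<le> log 2 (real d * p_max)"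
    unfolding C_MIO_def using eta by simp
  also have "\<dots> = log 2 (real d) + log 2 p_max" using d_pos p_max_pos by (simp add: log_mult)
  finally show ?thesis unfolding S_min_def p_max_def by simp
qed

end
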